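(* Let $b_1<b_2$, $T$ be positive integers, write $T-b_1=pb_2+q$ with $p\ge1$, $0\le q<b_2$, and assume $T-b_2\ge(p+1)b_1$. Let $k=T-b_1$. Over the $(b_1,T-b_2)$ burst erasure channel the SR-2 code (defined in the context) has delay profile $$(\underbrace{(p+1)b_1,\dots,(p+1)b_1}_{q},\underbrace{pb_1,\dots,pb_1}_{b_2},\dots,\underbrace{2b_1,\dots,2b_1}_{b_2},\underbrace{b_1,\dots,b_1}_{b_2}).$$
   Context: Point-to-point code: given $P_0,\dots,P_M\in\mathbb F^{k\times(n-k)}$ ($P_i=0$ for $i\notin[0,M]$), messages $S[t]=(s_1[t],\dots,s_k[t])\in\mathbb F^k$ ($S[t]=0$ for $t<0$) are sent as $(S[t],P[t])$, $P[t]=\sum_{i=0}^M S[t-i]P_i$; a $(b,M)$ burst channel erases packets so that in every window of $M+1$ consecutive slots the erased slots form at most one run of consecutive slots of length at most $b$. Delay profile $(d_1,\dots,d_k)$: for every admissible erasure pattern and all $t,i$, $s_i[t]$ is determined by the packets received at times $\le t+d_i$. SR-2 code (memory $M=T-b_2$, $n-k=b_2$): $P_i\in\mathbb F_2^{k\times b_2}$, $i\in[0,T-b_2]$: (a) for $j\in[p]$, $P_{jb_1}$ has $I_{b_2}$ in rows $(p-j)b_2+q+1,\dots,(p-j+1)b_2+q$, zeros elsewhere; (b) $P_{(p+1)b_1}(r,r)=1$ for $r\in[q]$, zeros elsewhere; (c) all other $P_i=0$. *)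

theory Defs
  imports Main "HOL-Library.Z2"
begin

text \<open>Time slots are natural numbers t = 0,1,2,...; the message S[t] for
  t < 0 is zero, so it is never transmitted. A message sequence is a function
  S :: nat => nat => bit, where S t i is the symbol s_i[t] (1 <= i <= k; values for other
  i are irrelevant). A parity matrix P_i is a function nat => nat => bit with 1-based
  row index r (1 <= r <= k) and column index c (1 <= c <= n-k).\<close>

definition parity ::
  "nat \<Rightarrow> nat \<Rightarrow> (nat \<Rightarrow> nat \<Rightarrow> nat \<Rightarrow> 'f::field) \<Rightarrow> (nat \<Rightarrow> nat \<Rightarrow> 'f) \<Rightarrow> nat \<Rightarrow> nat \<Rightarrow> 'f"
  where "parity k M P S t c = (\<Sum>i\<in>{0..min M t}. \<Sum>r\<in>{1..k}. S (t - i) r * P i r c)"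

definition burst_admissible :: "nat \<Rightarrow> nat \<Rightarrow> nat set \<Rightarrow> bool" where
  "burst_admissible b M E \<longleftrightarrow>
     (\<forall>w. E \<inter> {w..w+M} = {} \<or>
          (\<exists>a l. 1 \<le> l \<and> l \<le> b \<and> E \<inter> {w..w+M} = {a..<a+l}))"

definition has_delay_profile ::
  "nat \<Rightarrow> nat \<Rightarrow> nat \<Rightarrow> (nat \<Rightarrow> nat \<Rightarrow> nat \<Rightarrow> 'f::field) \<Rightarrow> nat \<Rightarrow> (nat \<Rightarrow> nat) \<Rightarrow> bool"
  where
  "has_delay_profile k nk M P b d \<longleftrightarrow>
     (\<forall>E S S' t r. burst_admissible b M E \<longrightarrow> r \<in> {1..k} \<longrightarrow>
        (\<forall>\<tau> \<le> t + d r. \<tau> \<notin> E \<longrightarrow>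
            (\<forall>i\<in>{1..k}. S \<tau> i = S' \<tau> i) \<and>
            (\<forall>c\<in>{1..nk}. parity k M P S \<tau> c = parity k M P S' \<tau> c)) \<longrightarrow>
        S t r = S' t r)"

definition SR2 :: "nat \<Rightarrow> nat \<Rightarrow> nat \<Rightarrow> nat \<Rightarrow> nat \<Rightarrow> nat \<Rightarrow> nat \<Rightarrow> nat \<Rightarrow> bit" where
  "SR2 b1 b2 T p q i r c =
     (if i \<le> T - b2 \<and> (\<exists>j\<in>{1..p}. i = j * b1 \<and> r = (p - j) * b2 + q + c \<and> c \<in> {1..b2})
        then 1
      else if i \<le> T - b2 \<and> i = (p + 1) * b1 \<and> r = c \<and> r \<in> {1..q} then 1
      else 0)"

text \<open>The claimed delay profile: q symbols of delay (p+1) b1, then for m = 1..p a block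
  of b2 symbols of delay (p+1-m) b1.\<close>
definition SR2_delay :: "nat \<Rightarrow> nat \<Rightarrow> nat \<Rightarrow> nat \<Rightarrow> nat \<Rightarrow> nat" where
  "SR2_delay b1 b2 p q r =
     (if r \<le> q then (p + 1) * b1 else (p + 1 - ((r - q - 1) div b2 + 1)) * b1)"

end

theory Submission
  imports Defs
begin

text \<open>Every symbol s_r[t] of the SR-2 code enters some parity column c at a single lag d_r,
  which is its claimed delay, and every other symbol entering column c does so at a lag
  differing from d_r by a nonzero multiple of b1. A burst of length at most b1 that erases
  slot t therefore erases neither the parity packet at t + d_r nor any other slot
  contributing to its column c, all of which lie in the window of M + 1 slots ending at
  t + d_r; subtracting their known contributions recovers s_r[t].\<close>

lemma summand_eq_if_sum_eq:
  fixes f g :: "'a \<Rightarrow> 'b::ab_group_add"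
  assumes "finite A" "sum f A = sum g A" "x \<in> A" "\<And>a. a \<in> A - {x} \<Longrightarrow> f a = g a"
  shows "f x = g x"
proof -
  have "sum f (A - {x}) = sum g (A - {x})" using assms(4) by (rule sum.cong[OF refl])
  with assms(2) show ?thesis by (simp add: sum.remove[OF assms(1,3)])
qed

lemma burst_admissible_close:
  assumes "burst_admissible b M E" "x \<in> E" "y \<in> E" "x \<in> {w..w+M}" "y \<in> {w..w+M}"
  shows "x < y + b"
proof -
  have "x \<in> E \<inter> {w..w+M}" "y \<in> E \<inter> {w..w+M}" using assms by auto
  moreover obtain a l where "l \<le> b" "E \<inter> {w..w+M} = {a..<a+l}"
    using assms(1) calculation unfolding burst_admissible_def by blast
  ultimately show ?thesis by auto
qed

definition parity_isolated ::
  "nat \<Rightarrow> nat \<Rightarrow> nat \<Rightarrow> (nat \<Rightarrow> nat \<Rightarrow> nat \<Rightarrow> 'f::field) \<Rightarrow> nat \<Rightarrow> nat \<Rightarrow> nat \<Rightarrow> bool" where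
  "parity_isolated b M k P d r c \<longleftrightarrow> P d r c \<noteq> 0 \<and>
     (\<forall>i\<le>M. \<forall>r'\<in>{1..k}. P i r' c \<noteq> 0 \<longrightarrow> (i, r') = (d, r) \<or> i + b \<le> d \<or> d + b \<le> i)"

lemma parity_sum_product:
  "parity k M P S t c = (\<Sum>(i, r)\<in>{0..min M t} \<times> {1..k}. S (t - i) r * P i r c)"
  unfolding parity_def by (simp add: sum.cartesian_product)

lemma recover_erased_symbol:
  fixes P :: "nat \<Rightarrow> nat \<Rightarrow> nat \<Rightarrow> 'f::field"
  assumes adm: "burst_admissible b M E" and "t \<in> E"
    and iso: "parity_isolated b M k P d r c" and "b \<le> d" "d \<le> M"
    and "c \<in> {1..nk}" and "r \<in> {1..k}"
    and received: "\<forall>\<tau> \<le> t + d. \<tau> \<notin> E \<longrightarrow>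
            (\<forall>i\<in>{1..k}. S \<tau> i = S' \<tau> i) \<and>
            (\<forall>c\<in>{1..nk}. parity k M P S \<tau> c = parity k M P S' \<tau> c)"
  shows "S t r = S' t r"
proof -
  define \<tau> where "\<tau> = t + d"
  have not_erased: "\<tau> - i \<notin> E" if "i \<le> M" "i \<le> \<tau>" "i + b \<le> d \<or> d + b \<le> i" for i
  proof
    assume "\<tau> - i \<in> E"
    have window: "t \<in> {\<tau>-M..\<tau>-M+M}" "\<tau> - i \<in> {\<tau>-M..\<tau>-M+M}"
      using that \<open>d \<le> M\<close> unfolding \<tau>_def by auto
    show False
      using burst_admissible_close[OF adm \<open>\<tau> - i \<in> E\<close> \<open>t \<in> E\<close> window(2,1)]
        burst_admissible_close[OF adm \<open>t \<in> E\<close> \<open>\<tau> - i \<in> E\<close> window]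
        that unfolding \<tau>_def by linarith
  qed
  define A where "A = {0..min M \<tau>} \<times> {1..k}"
  define f where "f = (\<lambda>(i, r'). S (\<tau> - i) r' * P i r' c)"
  define g where "g = (\<lambda>(i, r'). S' (\<tau> - i) r' * P i r' c)"
  have "finite A" unfolding A_def by simp
  have "\<tau> \<notin> E" using not_erased[of 0] \<open>b \<le> d\<close> by simp
  then have "sum f A = sum g A"
    using received \<open>c \<in> {1..nk}\<close> unfolding A_def f_def g_def \<tau>_def
    by (simp add: parity_sum_product)
  moreover have "(d, r) \<in> A" using \<open>d \<le> M\<close> \<open>r \<in> {1..k}\<close> unfolding A_def \<tau>_def by auto
  moreover have "f a = g a" if "a \<in> A - {(d, r)}" for a
  proof -
    obtain i r' where a: "a = (i, r')" by (cases a)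
    with that have i: "i \<le> M" "i \<le> \<tau>" "r' \<in> {1..k}" "(i, r') \<noteq> (d, r)"
      unfolding A_def by simp_all
    show ?thesis
    proof (cases "P i r' c = 0")
      case False
      then have "i + b \<le> d \<or> d + b \<le> i" using iso i unfolding parity_isolated_def by blast
      then have "\<tau> - i \<notin> E" using not_erased i by blast
      moreover have "\<tau> - i \<le> t + d" unfolding \<tau>_def by simp
      ultimately have "S (\<tau> - i) r' = S' (\<tau> - i) r'" using received i(3) by blast
      then show ?thesis unfolding f_def g_def a(1) by simp
    qed (simp add: f_def g_def a(1))
  qed
  ultimately have "f (d, r) = g (d, r)" by (rule summand_eq_if_sum_eq[OF \<open>finite A\<close>])
  with iso show ?thesis unfolding f_def g_def \<tau>_def parity_isolated_def by simp
qed

lemma has_delay_profileI_isolated: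
  fixes P :: "nat \<Rightarrow> nat \<Rightarrow> nat \<Rightarrow> 'f::field"
  assumes "\<And>r. r \<in> {1..k} \<Longrightarrow>
      b \<le> d r \<and> d r \<le> M \<and> (\<exists>c\<in>{1..nk}. parity_isolated b M k P (d r) r c)"
  shows "has_delay_profile k nk M P b d"
  unfolding has_delay_profile_def
proof (intro allI impI)
  fix E S S' t r
  assume adm: "burst_admissible b M E" and r: "r \<in> {1..k}"
    and received: "\<forall>\<tau> \<le> t + d r. \<tau> \<notin> E \<longrightarrow>
            (\<forall>i\<in>{1..k}. S \<tau> i = S' \<tau> i) \<and>
            (\<forall>c\<in>{1..nk}. parity k M P S \<tau> c = parity k M P S' \<tau> c)"
  show "S t r = S' t r"
  proof (cases "t \<in> E")
    case True
    with assms[OF r] show ?thesis using recover_erased_symbol[OF adm _ _ _ _ _ r received] by blast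
  qed (use received r in auto)
qed

lemma multiples_apart:
  fixes j j' b :: nat
  assumes "j \<noteq> j'"
  shows "j * b + b \<le> j' * b \<or> j' * b + b \<le> j * b"
proof -
  have "Suc j * b \<le> j' * b \<or> Suc j' * b \<le> j * b"
    using assms by (metis mult_le_mono1 not_less_eq_eq le_antisym)
  then show ?thesis by (simp add: add.commute)
qed

lemma SR2_nonzero_cases:
  assumes "SR2 b1 b2 T p q i r c \<noteq> 0"
  shows "(\<exists>j\<in>{1..p}. i = j * b1 \<and> r = (p - j) * b2 + q + c) \<or> (i = (p + 1) * b1 \<and> r = c)"
  using assms unfolding SR2_def by (auto split: if_splits)

lemma SR2_isolated_diagonal:
  assumes "r \<in> {1..q}" "(p + 1) * b1 \<le> T - b2"
  shows "parity_isolated b1 (T - b2) k (SR2 b1 b2 T p q) ((p + 1) * b1) r r"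
  unfolding parity_isolated_def
proof (intro conjI allI impI ballI)
  show "SR2 b1 b2 T p q ((p + 1) * b1) r r \<noteq> 0" using assms unfolding SR2_def by auto
next
  fix i r' assume "SR2 b1 b2 T p q i r' r \<noteq> 0"
  from SR2_nonzero_cases[OF this]
  consider j where "j \<le> p" "i = j * b1" | "i = (p + 1) * b1" "r' = r"
    by auto
  then show "(i, r') = ((p + 1) * b1, r) \<or> i + b1 \<le> (p + 1) * b1 \<or> (p + 1) * b1 + b1 \<le> i"
  proof cases
    case (1 j)
    then show ?thesis using multiples_apart[of j "p + 1" b1] by auto
  qed simp
qed

lemma SR2_isolated_block:
  assumes "j \<in> {1..p}" "c \<in> {1..b2}" "j * b1 \<le> T - b2"
  shows "parity_isolated b1 (T - b2) k (SR2 b1 b2 T p q) (j * b1) ((p - j) * b2 + q + c) c"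
  unfolding parity_isolated_def
proof (intro conjI allI impI ballI)
  show "SR2 b1 b2 T p q (j * b1) ((p - j) * b2 + q + c) c \<noteq> 0"
    using assms unfolding SR2_def by auto
next
  fix i r' assume "SR2 b1 b2 T p q i r' c \<noteq> 0"
  from SR2_nonzero_cases[OF this]
  consider j' where "j' \<le> p" "i = j' * b1" "r' = (p - j') * b2 + q + c"
    | "i = (p + 1) * b1"
    by auto
  then show "(i, r') = (j * b1, (p - j) * b2 + q + c) \<or> i + b1 \<le> j * b1 \<or> j * b1 + b1 \<le> i"
  proof cases
    case (1 j')
    then show ?thesis using multiples_apart[of j' j b1] by (cases "j' = j") auto
  next
    case 2
    then show ?thesis using assms(1) multiples_apart[of "p + 1" j b1] by auto
  qed
qed

lemma SR2_delay_block:
  assumes "q < r" "r \<le> p * b2 + q"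
  obtains j c where "j \<in> {1..p}" "c \<in> {1..b2}" "r = (p - j) * b2 + q + c"
    "SR2_delay b1 b2 p q r = j * b1"
proof
  define m where "m = (r - q - 1) div b2"
  have "b2 > 0" using assms by (cases "b2 = 0") auto
  have "m < p" using assms \<open>b2 > 0\<close> unfolding m_def by (simp add: div_less_iff_less_mult)
  then show "p - m \<in> {1..p}" by auto
  show "(r - q - 1) mod b2 + 1 \<in> {1..b2}" using \<open>b2 > 0\<close> by (simp add: Suc_leI)
  show "r = (p - (p - m)) * b2 + q + ((r - q - 1) mod b2 + 1)"
    using \<open>m < p\<close> assms div_mult_mod_eq[of "r - q - 1" b2] unfolding m_def by simp
  show "SR2_delay b1 b2 p q r = (p - m) * b1"
    using assms unfolding SR2_delay_def m_def by simp
qed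

theorem mainTheorem9:
  fixes b1 b2 T p q :: nat
  assumes "0 < b1" and "b1 < b2" and "0 < T"
    and "T - b1 = p * b2 + q" and "1 \<le> p" and "q < b2"
    and "(p + 1) * b1 \<le> T - b2"
  shows "has_delay_profile (T - b1) b2 (T - b2) (SR2 b1 b2 T p q) b1 (SR2_delay b1 b2 p q)"
proof (rule has_delay_profileI_isolated)
  fix r assume r: "r \<in> {1..T - b1}"
  show "b1 \<le> SR2_delay b1 b2 p q r \<and> SR2_delay b1 b2 p q r \<le> T - b2 \<and>
    (\<exists>c\<in>{1..b2}. parity_isolated b1 (T - b2) (T - b1) (SR2 b1 b2 T p q) (SR2_delay b1 b2 p q r) r c)"
  proof (cases "r \<le> q")
    case True
    then have "r \<in> {1..b2}" using r assms(6) by auto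
    moreover have "parity_isolated b1 (T - b2) (T - b1) (SR2 b1 b2 T p q) ((p + 1) * b1) r r"
      using SR2_isolated_diagonal[of r q p b1 T b2 "T - b1"] True r assms(7) by simp
    ultimately show ?thesis using True assms(7) by (auto simp: SR2_delay_def)
  next
    case False
    then obtain j c where j: "j \<in> {1..p}" "c \<in> {1..b2}" "r = (p - j) * b2 + q + c"
      "SR2_delay b1 b2 p q r = j * b1"
      using SR2_delay_block[of q r p b2] r assms(4) by auto
    have "b1 \<le> j * b1" "j * b1 \<le> T - b2"
      using j(1) assms(7) mult_le_mono1[of j "p + 1" b1] by auto
    moreover have "parity_isolated b1 (T - b2) (T - b1) (SR2 b1 b2 T p q) (j * b1) r c"
      using SR2_isolated_block[OF j(1,2) \<open>j * b1 \<le> T - b2\<close>] j(3) by simp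
    ultimately show ?thesis using j(2,4) by auto
  qed
qed

end
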